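(* Let $n\in\mathbb N$ and let $\mathcal A(S^1)^{(n)}$ be the algebra of lower-triangular $n\times n$ complex Toeplitz matrices. If $\phi:\mathcal A(S^1)^{(n)}\to M_n(\mathbb C)$ is a unital linear isometry (with respect to the operator norm), then there exists a unitary $v\in M_n(\mathbb C)$ such that $\phi(a)=v^*av$ for every $a\in\mathcal A(S^1)^{(n)}$.
   Context: A Toeplitz matrix is a matrix $[\tau_{k-\ell}]_{k,\ell=0}^{n-1}$; it is lower-triangular when $\tau_j=0$ for $j<0$. Unital means $\phi$ maps the identity matrix to the identity matrix. *)

theory Defs
  imports "HOL-Analysis.Analysis"
begin

text \<open>Matrices are elements of complex^'n^'n, where the finite index type 'n carries a
linear order; the position of an index i in the order (0,...,n-1) is idx i.\<close>

definition idx :: "'n::{finite,linorder} \<Rightarrow> nat" where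
  "idx i = card {j. j < i}"

definition lt_toeplitz :: "(complex^('n::{finite,linorder})^('n::{finite,linorder})) set" where
  "lt_toeplitz = {A. \<exists>\<tau>::nat \<Rightarrow> complex. \<forall>i j.
      A $ i $ j = (if idx j \<le> idx i then \<tau> (idx i - idx j) else 0)}"

definition opnorm :: "complex^'n^'m \<Rightarrow> real" where
  "opnorm A = onorm (\<lambda>x. A *v x)"

definition cscale :: "complex \<Rightarrow> complex^'n^'m \<Rightarrow> complex^'n^'m" where
  "cscale c A = (\<chi> i j. c * A $ i $ j)"

definition cadj :: "complex^'n^'m \<Rightarrow> complex^'m^'n" where
  "cadj A = (\<chi> i j. cnj (A $ j $ i))"

definition unitary_mat :: "complex^'n^'n \<Rightarrow> bool" where
  "unitary_mat v \<longleftrightarrow> cadj v ** v = mat 1 \<and> v ** cadj v = mat 1"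

end

theory Submission
  imports Defs
begin

text \<open>Let S be the shift and n the dimension. For \<bar>z\<bar> = 1 the Toeplitz matrix
  a_z = (1 + 2 (z S + ... + z^(n-1) S^(n-1)))/n has Hermitian part v_z v_z^*/n with
  v_z = (z^k)_k, so Re <x, a_z x> ranges over [0, 1] on unit vectors and attains 1.
  Such bounds are encoded in the norms of 1 + t a for small t > 0, so a unital isometry
  \<phi> preserves them: the Hermitian parts P_z of \<phi>(a_z) are positive contractions attaining
  the value 1. For the n points z = \<zeta> \<omega>^k, \<omega> = e^(2 \<pi> i/n), the a_z sum to 1, hence the
  P_z are orthogonal rank-one projections summing to 1, and their discrete Fourier transforms
  multiply like the powers of a unitary. Written through T_d = \<phi>(S^d), these multiplication
  rules involve the free phase \<beta> = cnj(\<zeta>^n); comparing coefficients of \<beta> gives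
  T_r T_s = T_(r+s) and T_1^* T_1 + T_(n-1) T_(n-1)^* = 1. A nilpotent A = T_1 with this defect
  identity is unitarily equivalent to S: the orbit A^k f of a unit vector f in ker A^* is an
  orthonormal basis. Hence \<phi>(S^d) = W S^d W^* for all d, and \<phi> is conjugation by W.\<close>

type_synonym 'n cvec = "complex^'n"
type_synonym 'n cmat = "complex^'n^'n"

section \<open>Adjoints and the Hermitian inner product\<close>

lemma cscale_nth [simp]: "cscale c A $ i $ j = c * A $ i $ j"
  by (simp add: cscale_def)

lemma cadj_nth [simp]: "cadj A $ i $ j = cnj (A $ j $ i)"
  by (simp add: cadj_def)

definition cinner :: "complex^'n \<Rightarrow> complex^'n \<Rightarrow> complex" where
  "cinner x y = (\<Sum>i\<in>UNIV. cnj (x$i) * y$i)"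

lemma cinner_mv_right: "cinner x (A *v y) = cinner (cadj A *v x) y"
proof -
  have "cinner x (A *v y) = (\<Sum>i\<in>UNIV. \<Sum>j\<in>UNIV. cnj (x$i) * A$i$j * y$j)"
    by (simp add: cinner_def matrix_vector_mult_def sum_distrib_left mult.assoc)
  also have "\<dots> = (\<Sum>j\<in>UNIV. \<Sum>i\<in>UNIV. cnj (x$i) * A$i$j * y$j)"
    by (rule sum.swap)
  also have "\<dots> = cinner (cadj A *v x) y"
    by (simp add: cinner_def matrix_vector_mult_def sum_distrib_left sum_distrib_right mult_ac)
  finally show ?thesis .
qed

lemma Re_cinner: "Re (cinner x y) = inner x y"
  by (simp add: cinner_def inner_vec_def inner_complex_def)

lemma cnj_cinner: "cnj (cinner x y) = cinner y x"
  by (simp add: cinner_def mult.commute)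

lemma cinner_self: "cinner x x = of_real ((norm x)\<^sup>2)"
proof -
  have "Im (cinner x x) = 0" by (simp add: cinner_def mult.commute)
  then show ?thesis by (simp add: complex_eq_iff Re_cinner power2_norm_eq_inner)
qed

lemma cinner_diff_left: "cinner (x - y) z = cinner x z - cinner y z"
  by (simp add: cinner_def left_diff_distrib sum_subtractf)

lemma cinner_diff_right: "cinner x (y - z) = cinner x y - cinner x z"
  by (simp add: cinner_def right_diff_distrib sum_subtractf)

lemma cinner_smult_left: "cinner (c *s x) y = cnj c * cinner x y"
  by (simp add: cinner_def sum_distrib_left mult_ac)

lemma cinner_smult_right: "cinner x (c *s y) = c * cinner x y"
  by (simp add: cinner_def sum_distrib_left mult_ac)

lemma scaleR_eq_smult: "t *\<^sub>R (x::complex^'n) = complex_of_real t *s x"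
  unfolding vec_eq_iff by (metis scaleR_conv_of_real vector_scaleR_component vector_smult_component)

lemma matrix_vector_mult_smult: "A *v (c *s x) = c *s (A *v (x::complex^'n))"
  by (simp add: matrix_vector_mult_def vec_eq_iff sum_distrib_left mult_ac)

lemma matrix_vector_mult_scaleR_complex: "A *v (t *\<^sub>R x) = t *\<^sub>R (A *v (x::complex^'n))"
  by (simp add: scaleR_eq_smult matrix_vector_mult_smult)

lemma norm_smult_complex: "norm (c *s (x::complex^'n)) = cmod c * norm x"
proof -
  have "complex_of_real ((norm (c *s x))\<^sup>2) = cinner (c *s x) (c *s x)"
    by (simp add: cinner_self)
  also have "\<dots> = cnj c * c * cinner x x"
    by (simp add: cinner_smult_left cinner_smult_right)
  also have "\<dots> = complex_of_real ((cmod c * norm x)\<^sup>2)"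
    by (metis cinner_self complex_norm_square mult.commute of_real_mult power_mult_distrib)
  finally have "(norm (c *s x))\<^sup>2 = (cmod c * norm x)\<^sup>2" by (simp only: of_real_eq_iff)
  then show ?thesis by (simp add: power2_eq_iff_nonneg)
qed

lemma cinner_cauchy_schwarz: "cmod (cinner x y) \<le> norm x * norm (y::complex^'n)"
proof -
  define c where "c = cinner x y"
  have "complex_of_real ((cmod c)\<^sup>2) = cinner x (cnj c *s y)"
    unfolding cinner_smult_right c_def complex_norm_square by (simp add: mult.commute)
  then have "(cmod c)\<^sup>2 = inner x (cnj c *s y)"
    by (metis Re_cinner Re_complex_of_real)
  also have "\<dots> \<le> cmod c * (norm x * norm y)"
    using norm_cauchy_schwarz[of x "cnj c *s y"] by (simp add: norm_smult_complex mult_ac)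
  finally show ?thesis
    by (cases "c = 0") (simp_all add: c_def power2_eq_square)
qed

lemma cadj_cadj [simp]: "cadj (cadj A) = A"
  by (simp add: vec_eq_iff)

lemma cadj_add: "cadj (A + B) = cadj A + cadj B"
  by (simp add: vec_eq_iff)

lemma cadj_diff: "cadj (A - B) = cadj A - cadj B"
  by (simp add: vec_eq_iff)

lemma cadj_cscale: "cadj (cscale c A) = cscale (cnj c) (cadj A)"
  by (simp add: vec_eq_iff)

lemma cadj_sum: "cadj (sum f D) = (\<Sum>d\<in>D. cadj (f d))"
  by (induction D rule: infinite_finite_induct) (simp_all add: vec_eq_iff)

lemma cadj_mat [simp]: "cadj (mat 1 :: complex^'n^'n) = mat 1"
  by (simp add: vec_eq_iff mat_def)

lemma cadj_matrix_mult: "cadj (A ** B) = cadj B ** cadj (A :: complex^'n^'m)"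
  by (simp add: vec_eq_iff matrix_matrix_mult_def mult.commute)

lemma cscale_add: "cscale c (A + B) = cscale c A + cscale c B"
  by (simp add: vec_eq_iff distrib_left)

lemma cscale_cscale: "cscale c (cscale d A) = cscale (c * d) A"
  by (simp add: vec_eq_iff mult_ac)

lemma cscale_one [simp]: "cscale 1 A = A"
  by (simp add: vec_eq_iff)

lemma cscale_zero [simp]: "cscale 0 A = 0"
  by (simp add: vec_eq_iff)

lemma cscale_zero_right [simp]: "cscale c 0 = 0"
  by (simp add: vec_eq_iff)

lemma cscale_minus_one: "cscale (-1) A = - A"
  by (simp add: vec_eq_iff)

lemma cscale_sum: "cscale c (sum f D) = (\<Sum>d\<in>D. cscale c (f d))"
  by (induction D rule: infinite_finite_induct) (simp_all add: cscale_add)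

lemma cscale_cancel: "c \<noteq> 0 \<Longrightarrow> cscale c A = cscale c B \<longleftrightarrow> A = B"
  by (auto simp: vec_eq_iff)

lemma cscale_matrix_vector_mult: "cscale c A *v x = c *s (A *v (x::complex^'n))"
  by (simp add: matrix_vector_mult_def vec_eq_iff sum_distrib_left mult_ac)

lemma cscale_matrix_mult_left: "cscale c A ** B = cscale c (A ** (B::complex^'p^'n))"
  by (simp add: vec_eq_iff matrix_matrix_mult_def sum_distrib_left mult_ac)

lemma cscale_matrix_mult_right: "A ** cscale c B = cscale c (A ** (B::complex^'p^'n))"
  by (simp add: vec_eq_iff matrix_matrix_mult_def sum_distrib_left mult_ac)

lemma matrix_add_rdistrib: "(A + B) ** C = A ** C + B ** (C::complex^'p^'n)"
  by (simp add: vec_eq_iff matrix_matrix_mult_def distrib_right sum.distrib)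

lemma matrix_sum_mult: "sum f D ** (B::complex^'p^'n) = (\<Sum>d\<in>D. f d ** B)"
  by (induction D rule: infinite_finite_induct) (simp_all add: matrix_add_rdistrib)

lemma matrix_mult_sum: "(B::complex^'p^'n) ** sum f D = (\<Sum>d\<in>D. B ** f d)"
  by (induction D rule: infinite_finite_induct) (simp_all add: matrix_add_ldistrib)

lemma matrix_vector_mult_uminus: "(- A) *v x = - (A *v (x::complex^'n))"
  by (simp add: matrix_vector_mult_def sum_negf vec_eq_iff)

lemma matrix_sum_vector_mult: "sum f D *v (x::complex^'n) = (\<Sum>d\<in>D. f d *v x)"
  by (induction D rule: infinite_finite_induct) (simp_all add: matrix_vector_mult_add_rdistrib)

definition hermitian :: "complex^'n^'n \<Rightarrow> bool" where
  "hermitian H \<longleftrightarrow> cadj H = H"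

lemma hermitian_cinner: "hermitian H \<Longrightarrow> cinner x (H *v y) = cinner (H *v x) y"
  unfolding hermitian_def by (metis cinner_mv_right)

lemma hermitian_inner: "hermitian H \<Longrightarrow> inner x (H *v y) = inner (H *v x) (y::complex^'n)"
  by (metis Re_cinner hermitian_cinner)

definition re_part :: "complex^'n^'n \<Rightarrow> complex^'n^'n" where
  "re_part X = cscale (1/2) (X + cadj X)"

lemma re_part_uminus: "re_part (- X) = - re_part X"
  by (simp add: re_part_def vec_eq_iff field_simps)

lemma hermitian_re_part: "hermitian (re_part X)"
  by (simp add: hermitian_def re_part_def cadj_cscale cadj_add add.commute)

lemma inner_re_part: "inner x (re_part X *v x) = inner x (X *v (x::complex^'n))"
proof -
  have "inner x (cadj X *v x) = inner x (X *v x)"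
    by (metis Re_cinner cinner_mv_right cnj_cinner cadj_cadj complex_cnj_cnj cnj.sel(1))
  moreover have "re_part X *v x = (1/2::real) *\<^sub>R (X *v x + cadj X *v x)"
    by (simp add: re_part_def cscale_matrix_vector_mult matrix_vector_mult_add_rdistrib
        scaleR_eq_smult)
  ultimately show ?thesis by (simp add: inner_add_right)
qed

definition outer :: "complex^'n \<Rightarrow> complex^'n \<Rightarrow> complex^'n^'n" where
  "outer x y = (\<chi> i j. x$i * cnj (y$j))"

lemma outer_matrix_vector_mult: "outer x y *v z = cinner y z *s x"
  by (simp add: outer_def matrix_vector_mult_def cinner_def vec_eq_iff sum_distrib_left mult_ac)

lemma outer_matrix_mult: "outer a b ** outer c d = cscale (cinner b c) (outer a d)"
  by (simp add: outer_def matrix_matrix_mult_def cinner_def vec_eq_iff sum_distrib_left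
      sum_distrib_right mult_ac)

lemma hermitian_outer: "hermitian (outer x x)"
  by (simp add: hermitian_def outer_def vec_eq_iff mult.commute)

lemma inner_outer: "inner y (outer x x *v y) = (cmod (cinner x y))\<^sup>2"
proof -
  have "cinner y (outer x x *v y) = cinner x y * cnj (cinner x y)"
    by (simp add: outer_matrix_vector_mult cinner_smult_right cnj_cinner)
  then show ?thesis
    by (metis Re_cinner Re_complex_of_real complex_norm_square)
qed

lemma matrix_quadratic_identity_coeffs:
  fixes M0 M1 M2 N0 N1 :: "complex^'n^'m"
  assumes "\<And>\<beta>. \<beta> \<in> {1, -1, -\<i>} \<Longrightarrow> M0 + cscale \<beta> M1 + cscale (\<beta>\<^sup>2) M2 = N0 + cscale \<beta> N1"
  shows "M0 = N0" and "M1 = N1"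
proof -
  have "M0 $ i $ j = N0 $ i $ j \<and> M1 $ i $ j = N1 $ i $ j" for i j
  proof -
    have "(M0 + cscale \<beta> M1 + cscale (\<beta>\<^sup>2) M2) $ i $ j = (N0 + cscale \<beta> N1) $ i $ j"
      if "\<beta> \<in> {1, -1, -\<i>}" for \<beta>
      using assms[OF that] by simp
    from this[of 1] this[of "-1"] this[of "-\<i>"] show ?thesis
      by (simp add: power2_eq_square complex_eq_iff)
  qed
  then show "M0 = N0" and "M1 = N1" by (simp_all add: vec_eq_iff)
qed

section \<open>Positive matrices\<close>

lemma quadratic_nonneg_imp_linear_coeff_zero:
  fixes b c :: real
  assumes "\<And>t. 0 \<le> b * t + c * t\<^sup>2"
  shows "b = 0"
proof (rule ccontr)
  assume "b \<noteq> 0"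
  define a where "a = \<bar>c\<bar> + 1"
  define t where "t = - b / a"
  have a: "a > 0" by (simp add: a_def add_pos_nonneg)
  have "0 \<le> b * t + c * t\<^sup>2" by (rule assms)
  also have "\<dots> \<le> b * t + (a - 1) * t\<^sup>2" by (simp add: a_def mult_right_mono)
  also have "\<dots> = - b\<^sup>2 / a\<^sup>2"
    using a by (simp add: t_def field_simps power2_eq_square)
  also have "\<dots> < 0" using \<open>b \<noteq> 0\<close> a by simp
  finally show False by simp
qed

definition psd :: "complex^'n^'n \<Rightarrow> bool" where
  "psd R \<longleftrightarrow> hermitian R \<and> (\<forall>x. 0 \<le> inner x (R *v x))"

lemma psd_quadratic_form_eq_0:
  assumes "psd R" and "inner y (R *v y) = 0"
  shows "R *v y = 0"
proof -
  define u where "u = R *v y"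
  have "0 \<le> 2 * inner u u * t + inner u (R *v u) * t\<^sup>2" for t
  proof -
    have "0 \<le> inner (y + t *\<^sub>R u) (R *v (y + t *\<^sub>R u))"
      using assms(1) by (simp add: psd_def)
    also have "\<dots> = inner y (R *v y) + t * inner y (R *v u) + t * inner u (R *v y)
        + t\<^sup>2 * inner u (R *v u)"
      by (simp add: matrix_vector_right_distrib matrix_vector_mult_scaleR_complex inner_add_left
          inner_add_right power2_eq_square algebra_simps)
    also have "inner y (R *v u) = inner u u"
      using assms(1) by (simp add: psd_def hermitian_inner u_def)
    finally show ?thesis using assms(2) by (simp add: u_def algebra_simps)
  qed
  then have "2 * inner u u = 0" by (rule quadratic_nonneg_imp_linear_coeff_zero)
  then show ?thesis by (simp add: u_def)
qed

lemma psd_fixes_vector_of_max: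
  assumes "psd (mat 1 - P)" and "norm x = 1" and "inner x (P *v x) = 1"
  shows "P *v x = x"
proof -
  have "inner x ((mat 1 - P) *v x) = 0"
    using assms(2,3) by (simp add: matrix_vector_mult_diff_rdistrib inner_diff_right
        flip: power2_norm_eq_inner)
  then have "(mat 1 - P) *v x = 0" by (rule psd_quadratic_form_eq_0[OF assms(1)])
  then show ?thesis by (simp add: matrix_vector_mult_diff_rdistrib)
qed

lemma psd_diff_outer:
  assumes "psd P" and "P *v x = x" and "norm x = 1"
  shows "psd (P - outer x x)"
  unfolding psd_def
proof (intro conjI allI)
  show "hermitian (P - outer x x)"
    using assms(1) hermitian_outer[of x] by (simp add: psd_def hermitian_def cadj_diff)
next
  fix y
  define \<alpha> where "\<alpha> = cinner x y"
  define y' where "y' = y - \<alpha> *s x"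
  have herm: "hermitian P" using assms(1) by (simp add: psd_def)
  have c1: "cinner x (P *v y) = \<alpha>"
    using hermitian_cinner[OF herm, of x y] assms(2) by (simp add: \<alpha>_def)
  have c2: "cinner y x = cnj \<alpha>" by (simp add: \<alpha>_def cnj_cinner)
  have c3: "cinner x x = 1" using assms(3) by (simp add: cinner_self)
  have "cinner y' (P *v y') = cinner y (P *v y) - \<alpha> * cinner y x - cnj \<alpha> * cinner x (P *v y)
      + cnj \<alpha> * \<alpha> * cinner x x"
    by (simp add: y'_def matrix_vector_mult_diff_distrib matrix_vector_mult_smult assms(2)
        cinner_diff_left cinner_diff_right cinner_smult_left cinner_smult_right algebra_simps)
  also have "\<dots> = cinner y (P *v y) - \<alpha> * cnj \<alpha>" unfolding c1 c2 c3 by simp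
  finally have "inner y' (P *v y') = inner y (P *v y) - (cmod \<alpha>)\<^sup>2"
    by (metis Re_cinner Re_complex_of_real complex_norm_square minus_complex.sel(1))
  moreover have "0 \<le> inner y' (P *v y')" using assms(1) by (simp add: psd_def)
  ultimately show "0 \<le> inner y ((P - outer x x) *v y)"
    by (simp add: matrix_vector_mult_diff_rdistrib inner_diff_right inner_outer \<alpha>_def)
qed

definition re_trace :: "complex^'n^'n \<Rightarrow> real" where
  "re_trace M = (\<Sum>i\<in>UNIV. Re (M$i$i))"

lemma re_diag_eq_inner: "Re (M$i$i) = inner (axis i 1) (M *v axis i (1::complex))"
proof -
  have "(M *v axis i 1) $ i = M$i$i"
    by (simp add: matrix_vector_mult_def axis_def if_distrib cong: if_cong)
  then show ?thesis by (simp add: inner_axis' inner_complex_def)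
qed

lemma re_trace_diff: "re_trace (A - B) = re_trace A - re_trace B"
  by (simp add: re_trace_def sum_subtractf)

lemma re_trace_sum: "re_trace (sum f D) = (\<Sum>d\<in>D. re_trace (f d))"
  by (simp add: re_trace_def) (rule sum.swap)

lemma re_trace_mat_1: "re_trace (mat 1 :: complex^'n^'n) = real CARD('n)"
  by (simp add: re_trace_def mat_def)

lemma re_trace_outer: "re_trace (outer x x) = (norm x)\<^sup>2"
proof -
  have "complex_of_real (re_trace (outer x x)) = complex_of_real (Re (cinner x x))"
    by (simp add: re_trace_def outer_def cinner_def mult.commute)
  then show ?thesis by (simp add: Re_cinner power2_norm_eq_inner)
qed

lemma re_trace_nonneg: "psd Q \<Longrightarrow> 0 \<le> re_trace Q"
  unfolding re_trace_def re_diag_eq_inner psd_def by (simp add: sum_nonneg)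

lemma psd_re_trace_eq_0:
  assumes "psd Q" and "re_trace Q = 0"
  shows "Q = 0"
proof -
  have diag: "inner (axis i 1) (Q *v axis i 1) = 0" for i
    using assms sum_nonneg_eq_0_iff[of UNIV "\<lambda>i. Re (Q$i$i)"]
    unfolding re_trace_def re_diag_eq_inner psd_def by simp
  have "Q $ j $ i = (Q *v axis i 1) $ j" for i j
    by (simp add: matrix_vector_mult_def axis_def if_distrib cong: if_cong)
  then have "Q $ j $ i = 0" for i j
    using psd_quadratic_form_eq_0[OF assms(1) diag, of i] by simp
  then show ?thesis by (simp add: vec_eq_iff)
qed

lemma psd_resolution_annihilates:
  fixes P :: "'i \<Rightarrow> complex^'n^'n"
  assumes pos: "\<And>j. j \<in> J \<Longrightarrow> psd (P j)" and resolution: "(\<Sum>j\<in>J. P j) = mat 1"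
    and "finite J" and "k \<in> J" and "l \<in> J" and "l \<noteq> k"
    and "norm x = 1" and "inner x (P k *v x) = 1"
  shows "P l *v x = 0"
proof -
  have "(\<Sum>j\<in>J. inner x (P j *v x)) = inner x ((\<Sum>j\<in>J. P j) *v x)"
    by (simp add: inner_sum_right matrix_sum_vector_mult)
  also have "\<dots> = inner x (P k *v x)"
    using assms(7,8) by (simp add: resolution power2_norm_eq_inner[symmetric])
  finally have "(\<Sum>j\<in>J - {k}. inner x (P j *v x)) = 0"
    using assms(3,4) by (simp add: sum.remove)
  moreover have "\<forall>j\<in>J - {k}. 0 \<le> inner x (P j *v x)"
    using pos by (simp add: psd_def)
  ultimately have "inner x (P l *v x) = 0"
    using assms(3,5,6) sum_nonneg_eq_0_iff[of "J - {k}" "\<lambda>j. inner x (P j *v x)"] by simp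
  then show ?thesis using psd_quadratic_form_eq_0 pos assms(5) by blast
qed

text \<open>P k - x x^* is positive for the unit vector x where P k attains 1, so each P k has trace
  at least one; the traces add up to the dimension.\<close>

lemma psd_resolution_rank_one:
  fixes P :: "nat \<Rightarrow> complex^'n^'n"
  assumes pos: "\<And>k. k < CARD('n) \<Longrightarrow> psd (P k)"
    and contraction: "\<And>k. k < CARD('n) \<Longrightarrow> psd (mat 1 - P k)"
    and attained: "\<And>k. k < CARD('n) \<Longrightarrow> \<exists>x. norm x = 1 \<and> inner x (P k *v x) = 1"
    and resolution: "(\<Sum>k<CARD('n). P k) = mat 1"
  obtains x where "\<And>k. k < CARD('n) \<Longrightarrow> norm (x k) = 1 \<and> inner (x k) (P k *v x k) = 1"
    and "\<And>k. k < CARD('n) \<Longrightarrow> P k = outer (x k) (x k)"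
proof -
  let ?n = "CARD('n)"
  obtain x where x: "\<And>k. k < ?n \<Longrightarrow> norm (x k) = 1 \<and> inner (x k) (P k *v x k) = 1"
    using attained by metis
  have psd_rest: "psd (P k - outer (x k) (x k))" if "k < ?n" for k
    using psd_diff_outer pos psd_fixes_vector_of_max[OF contraction] x that by blast
  have "(\<Sum>k<?n. re_trace (P k - outer (x k) (x k))) = re_trace (mat 1 :: complex^'n^'n) - real ?n"
    using x by (simp add: re_trace_diff re_trace_outer sum_subtractf flip: resolution re_trace_sum)
  then have "(\<Sum>k<?n. re_trace (P k - outer (x k) (x k))) = 0"
    by (simp add: re_trace_mat_1)
  then have "re_trace (P k - outer (x k) (x k)) = 0" if "k < ?n" for k
    using sum_nonneg_eq_0_iff[of "{..<?n}" "\<lambda>k. re_trace (P k - outer (x k) (x k))"]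
      re_trace_nonneg[OF psd_rest] that by simp
  then have "P k = outer (x k) (x k)" if "k < ?n" for k
    using psd_re_trace_eq_0[OF psd_rest] that by fastforce
  then show ?thesis using that x by blast
qed

lemma psd_resolution_orthogonal:
  fixes P :: "nat \<Rightarrow> complex^'n^'n"
  assumes pos: "\<And>k. k < CARD('n) \<Longrightarrow> psd (P k)"
    and contraction: "\<And>k. k < CARD('n) \<Longrightarrow> psd (mat 1 - P k)"
    and attained: "\<And>k. k < CARD('n) \<Longrightarrow> \<exists>x. norm x = 1 \<and> inner x (P k *v x) = 1"
    and resolution: "(\<Sum>k<CARD('n). P k) = mat 1"
    and k: "k < CARD('n)" and l: "l < CARD('n)"
  shows "P k ** P l = (if k = l then P k else 0)"
proof -
  let ?n = "CARD('n)"
  obtain x where x: "\<And>k. k < ?n \<Longrightarrow> norm (x k) = 1 \<and> inner (x k) (P k *v x k) = 1"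
    and rank_one: "\<And>k. k < ?n \<Longrightarrow> P k = outer (x k) (x k)"
    using psd_resolution_rank_one[OF pos contraction attained resolution] by blast
  have "cinner (x k) (x l) = 0" if "k \<noteq> l"
  proof -
    have "P k *v x l = 0"
      using psd_resolution_annihilates[where J = "{..<?n}" and k = l and l = k] pos resolution
        x[OF l] k l that by auto
    then have "cinner (x k) (x l) *s x k = 0"
      using rank_one[OF k] by (simp add: outer_matrix_vector_mult)
    moreover have "x k \<noteq> 0" using x[OF k] by force
    ultimately show ?thesis by simp
  qed
  then show ?thesis
    using rank_one[OF k] rank_one[OF l] x[OF k] by (auto simp: outer_matrix_mult cinner_self)
qed

section \<open>Numerical range and operator norm\<close>

lemma opnorm_bound: "norm (A *v x) \<le> opnorm A * norm (x::complex^'n)"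
  unfolding opnorm_def using onorm[OF matrix_vector_mul_bounded_linear] by blast

lemma opnorm_le: "(\<And>x. norm (A *v x) \<le> b * norm (x::complex^'n)) \<Longrightarrow> opnorm A \<le> b"
  unfolding opnorm_def by (rule onorm_le)

lemma opnorm_nonneg: "0 \<le> opnorm (A::complex^'n^'m)"
  unfolding opnorm_def by (rule onorm_pos_le[OF matrix_vector_mul_bounded_linear])

definition re_numrange_le :: "complex^'n^'n \<Rightarrow> real \<Rightarrow> bool" where
  "re_numrange_le X c \<longleftrightarrow> (\<forall>x. inner x (X *v x) \<le> c * (norm x)\<^sup>2)"

lemma re_numrange_le_re_part_iff: "re_numrange_le (re_part X) c \<longleftrightarrow> re_numrange_le X c"
  by (simp add: re_numrange_le_def inner_re_part)

lemma psd_iff_re_numrange_le: "hermitian R \<Longrightarrow> psd R \<longleftrightarrow> re_numrange_le (- R) 0"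
  by (simp add: psd_def re_numrange_le_def matrix_vector_mult_uminus)

lemma psd_one_minus_iff_re_numrange_le:
  "hermitian P \<Longrightarrow> psd (mat 1 - P) \<longleftrightarrow> re_numrange_le P 1"
  by (simp add: psd_def re_numrange_le_def hermitian_def cadj_diff matrix_vector_mult_diff_rdistrib
      inner_diff_right power2_norm_eq_inner)

lemma norm_perturb_identity_sq:
  "(norm ((mat 1 + cscale (of_real t) X) *v x))\<^sup>2
    = (norm x)\<^sup>2 + 2 * t * inner x (X *v x) + t\<^sup>2 * (norm (X *v (x::complex^'n)))\<^sup>2"
proof -
  have "(mat 1 + cscale (of_real t) X) *v x = x + t *\<^sub>R (X *v x)"
    by (simp add: matrix_vector_mult_add_rdistrib cscale_matrix_vector_mult scaleR_eq_smult)
  then show ?thesis unfolding power2_norm_eq_inner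
    by (simp add: inner_add_left inner_add_right inner_commute[of "X *v x" x]
        power2_eq_square algebra_simps)
qed

lemma opnorm_perturb_identity_sq_le:
  fixes X :: "complex^'n^'n"
  assumes "re_numrange_le X c" and "0 \<le> t"
  shows "(opnorm (mat 1 + cscale (of_real t) X))\<^sup>2 \<le> 1 + 2 * t * c + t\<^sup>2 * (opnorm X)\<^sup>2"
    (is "_ \<le> ?q")
proof -
  have sq: "(norm ((mat 1 + cscale (of_real t) X) *v y))\<^sup>2 \<le> ?q * (norm y)\<^sup>2" for y
  proof -
    have "t * inner y (X *v y) \<le> t * (c * (norm y)\<^sup>2)"
      using assms by (simp add: re_numrange_le_def mult_left_mono)
    moreover have "t\<^sup>2 * (norm (X *v y))\<^sup>2 \<le> t\<^sup>2 * (opnorm X * norm y)\<^sup>2"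
      by (intro mult_left_mono power_mono opnorm_bound) simp_all
    ultimately show ?thesis
      unfolding norm_perturb_identity_sq by (simp add: algebra_simps power_mult_distrib)
  qed
  obtain i :: 'n where True by blast
  have "0 \<le> ?q"
    using sq[of "axis i 1"] by (simp add: norm_axis_1) (meson order_trans zero_le_power2)
  have "opnorm (mat 1 + cscale (of_real t) X) \<le> sqrt ?q"
  proof (rule opnorm_le)
    fix y :: "complex^'n"
    have "norm ((mat 1 + cscale (of_real t) X) *v y) \<le> sqrt (?q * (norm y)\<^sup>2)"
      using sq real_le_rsqrt by blast
    then show "norm ((mat 1 + cscale (of_real t) X) *v y) \<le> sqrt ?q * norm y"
      by (simp add: real_sqrt_mult)
  qed
  then show ?thesis
    using \<open>0 \<le> ?q\<close> opnorm_nonneg by (metis power_mono real_sqrt_pow2)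
qed

lemma re_numrange_le_of_opnorm_perturb_identity:
  fixes Y :: "complex^'n^'n"
  assumes "\<And>t. 0 < t \<Longrightarrow> (opnorm (mat 1 + cscale (of_real t) Y))\<^sup>2 \<le> 1 + 2 * t * c + t\<^sup>2 * K"
  shows "re_numrange_le Y c"
  unfolding re_numrange_le_def
proof
  fix x :: "complex^'n"
  have "inner x (Y *v x) \<le> c * (norm x)\<^sup>2 + e" if "0 < e" for e
  proof -
    define M where "M = \<bar>K\<bar> * (norm x)\<^sup>2 + 1"
    define t where "t = 2 * e / M"
    have "M > 0" "t > 0" using \<open>0 < e\<close> by (simp_all add: M_def t_def add_nonneg_pos)
    have "(norm x)\<^sup>2 + 2 * t * inner x (Y *v x) \<le> (norm ((mat 1 + cscale (of_real t) Y) *v x))\<^sup>2"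
      unfolding norm_perturb_identity_sq by simp
    also have "\<dots> \<le> (opnorm (mat 1 + cscale (of_real t) Y) * norm x)\<^sup>2"
      by (simp add: opnorm_bound power_mono)
    also have "\<dots> \<le> (1 + 2 * t * c + t\<^sup>2 * K) * (norm x)\<^sup>2"
      using assms[OF \<open>t > 0\<close>] by (simp add: power_mult_distrib mult_right_mono)
    finally have "2 * t * inner x (Y *v x) \<le> 2 * t * (c * (norm x)\<^sup>2 + t / 2 * (K * (norm x)\<^sup>2))"
      by (simp add: algebra_simps power2_eq_square)
    then have "inner x (Y *v x) \<le> c * (norm x)\<^sup>2 + t / 2 * (K * (norm x)\<^sup>2)"
      using mult_le_cancel_left_pos[of "2 * t"] \<open>t > 0\<close> by simp
    also have "t / 2 * (K * (norm x)\<^sup>2) \<le> t / 2 * M"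
      using \<open>t > 0\<close> by (intro mult_left_mono) (auto simp: M_def abs_mult_pos)
    also have "t / 2 * M = e" using \<open>M > 0\<close> by (simp add: t_def)
    finally show ?thesis by simp
  qed
  then show "inner x (Y *v x) \<le> c * (norm x)\<^sup>2" by (rule field_le_epsilon)
qed

text \<open>Since norm (1 + t X) = 1 + t c + O(t^2), where c is the maximum of Re <x, X x> over unit
  vectors, such bounds are determined by the norms of the perturbations of the identity.\<close>

lemma re_numrange_le_transfer:
  fixes X Y :: "complex^'n^'n"
  assumes "\<And>t. 0 < t \<Longrightarrow>
      opnorm (mat 1 + cscale (of_real t) Y) \<le> opnorm (mat 1 + cscale (of_real t) X)"
    and "re_numrange_le X c"
  shows "re_numrange_le Y c"
proof (rule re_numrange_le_of_opnorm_perturb_identity)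
  fix t :: real assume "0 < t"
  have "(opnorm (mat 1 + cscale (of_real t) Y))\<^sup>2 \<le> (opnorm (mat 1 + cscale (of_real t) X))\<^sup>2"
    using assms(1)[OF \<open>0 < t\<close>] opnorm_nonneg by (rule power_mono)
  also have "\<dots> \<le> 1 + 2 * t * c + t\<^sup>2 * (opnorm X)\<^sup>2"
    using assms(2) \<open>0 < t\<close> by (intro opnorm_perturb_identity_sq_le) simp_all
  finally show "(opnorm (mat 1 + cscale (of_real t) Y))\<^sup>2 \<le> 1 + 2 * t * c + t\<^sup>2 * (opnorm X)\<^sup>2" .
qed

lemma re_numrange_max_attained:
  fixes X :: "complex^'n^'n"
  assumes "re_numrange_le X 1" and "\<And>c. c < 1 \<Longrightarrow> \<not> re_numrange_le X c"
  shows "\<exists>x. norm x = 1 \<and> inner x (X *v x) = 1"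
proof -
  let ?f = "\<lambda>x. inner x (X *v x)"
  have cont: "continuous_on (sphere 0 1) ?f"
    by (intro continuous_on_inner continuous_on_id linear_continuous_on
        matrix_vector_mul_bounded_linear)
  obtain i :: 'n where True by blast
  have "axis i 1 \<in> sphere (0::complex^'n) 1" by (simp add: norm_axis_1)
  then obtain x0 where x0: "x0 \<in> sphere 0 1" and max: "\<forall>y\<in>sphere 0 1. ?f y \<le> ?f x0"
    using continuous_attains_sup[OF compact_sphere _ cont] by blast
  have "re_numrange_le X (?f x0)"
    unfolding re_numrange_le_def
  proof
    fix y :: "complex^'n"
    show "?f y \<le> ?f x0 * (norm y)\<^sup>2"
    proof (cases "y = 0")
      case False
      have "?f y = (norm y)\<^sup>2 * ?f ((1 / norm y) *\<^sub>R y)"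
        using False by (simp add: matrix_vector_mult_scaleR_complex power2_eq_square)
      moreover have "?f ((1 / norm y) *\<^sub>R y) \<le> ?f x0"
        by (rule max[rule_format]) (use False in simp)
      ultimately show ?thesis by (metis mult.commute mult_right_mono zero_le_power2)
    qed simp
  qed
  then have "1 \<le> ?f x0" using assms(2) by force
  moreover have "?f x0 \<le> 1"
    using assms(1) x0 unfolding re_numrange_le_def by (metis mem_sphere_0 mult_1 power_one)
  ultimately show ?thesis using x0 by force
qed

section \<open>Roots of unity\<close>

lemma mult_cnj_eq_1: "norm z = 1 \<Longrightarrow> z * cnj z = 1"
  by (metis complex_norm_square of_real_1 power_one)

lemma unit_pow_mult_cnj_pow:
  assumes "norm z = 1" and "b \<le> a"
  shows "z ^ a * cnj z ^ b = z ^ (a - b)"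
proof -
  have "z ^ a * cnj z ^ b = z ^ (a - b) * (z * cnj z) ^ b"
    using assms(2) by (simp add: power_mult_distrib mult.assoc flip: power_add)
  then show ?thesis using mult_cnj_eq_1[OF assms(1)] by simp
qed

lemma exists_unit_power_cnj_eq:
  assumes "norm \<beta> = 1" and "n > 0"
  shows "\<exists>\<zeta>. norm \<zeta> = 1 \<and> cnj (\<zeta> ^ n) = \<beta>"
proof -
  have "cis (- Arg \<beta> / real n) ^ n = cis (real n * (- Arg \<beta> / real n))"
    by (rule Complex.DeMoivre)
  also have "\<dots> = cis (- Arg \<beta>)"
    using assms(2) by simp
  also have "\<dots> = cnj (cis (Arg \<beta>))" by (simp add: cis_cnj)
  also have "cis (Arg \<beta>) = \<beta>"
    using assms(1) cis_Arg[of \<beta>] by (cases "\<beta> = 0") (auto simp: sgn_div_norm)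
  finally show ?thesis by (metis complex_cnj_cnj norm_cis)
qed

lemma cnj_eq_of_mult_eq_1:
  assumes "w * u = 1" and "norm w = 1"
  shows "cnj w = u"
proof -
  have "cnj w = cnj w * (w * u)" using assms(1) by simp
  also have "\<dots> = (w * cnj w) * u" by (simp only: mult_ac)
  finally show ?thesis using mult_cnj_eq_1[OF assms(2)] by simp
qed

lemma dvd_iff_eq_if_less_double:
  assumes "0 < m" and "m < 2 * n"
  shows "n dvd m \<longleftrightarrow> m = (n::nat)"
proof
  assume "n dvd m"
  then obtain q where q: "m = n * q" by auto
  with assms have "0 < q" "q < 2" by (simp_all add: mult.commute)
  then show "m = n" using q by simp
qed simp

definition unit_root :: "nat \<Rightarrow> complex" where
  "unit_root n = cis (2 * pi / real n)"

lemma norm_unit_root [simp]: "norm (unit_root n) = 1"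
  by (simp add: unit_root_def)

lemma unit_root_pow: "unit_root n ^ k = cis (2 * pi * real k / real n)"
proof -
  have "unit_root n ^ k = cis (real k * (2 * pi / real n))"
    by (simp only: unit_root_def Complex.DeMoivre)
  then show ?thesis by (simp add: mult.commute)
qed

lemma unit_root_pow_mod: "n > 0 \<Longrightarrow> unit_root n ^ m = unit_root n ^ (m mod n)"
proof -
  assume "n > 0"
  then have "unit_root n ^ n = 1" by (simp add: unit_root_pow)
  then have "unit_root n ^ (n * (m div n) + m mod n) = unit_root n ^ (m mod n)"
    by (simp only: power_add power_mult) simp
  then show ?thesis by simp
qed

lemma unit_root_pow_eq_1_iff: "n > 0 \<Longrightarrow> unit_root n ^ m = 1 \<longleftrightarrow> n dvd m"
proof
  assume n: "n > 0" and "unit_root n ^ m = 1"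
  let ?root = "\<lambda>k. cis (2 * pi * real k / real n)"
  have "?root (m mod n) = unit_root n ^ (m mod n)" by (simp add: unit_root_pow)
  also have "\<dots> = ?root 0" using \<open>unit_root n ^ m = 1\<close> by (simp flip: unit_root_pow_mod[OF n])
  finally have "?root (m mod n) = ?root 0" .
  moreover have "inj_on ?root {..<n}"
    using Complex.bij_betw_roots_unity[OF n] by (simp add: bij_betw_def)
  ultimately have "m mod n = 0" using n inj_onD[of ?root "{..<n}" "m mod n" 0] by simp
  then show "n dvd m" by auto
next
  assume "n > 0" and "n dvd m"
  then show "unit_root n ^ m = 1"
    by (auto simp: unit_root_pow_mod)
qed

lemma sum_unit_root_pow:
  assumes "n > 0"
  shows "(\<Sum>k<n. unit_root n ^ (k * m)) = (if n dvd m then of_nat n else 0)"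
proof -
  have pow: "unit_root n ^ (k * m) = (unit_root n ^ m) ^ k" for k
    by (metis power_mult mult.commute)
  show ?thesis
  proof (cases "n dvd m")
    case False
    then have "unit_root n ^ m \<noteq> 1" using unit_root_pow_eq_1_iff[OF assms] by simp
    moreover have "(unit_root n ^ m) ^ n = 1"
      using unit_root_pow_eq_1_iff[OF assms, of "m * n"] by (simp add: power_mult)
    ultimately show ?thesis using False by (simp add: pow geometric_sum)
  next
    case True
    then have "unit_root n ^ m = 1" using unit_root_pow_eq_1_iff[OF assms] by simp
    then show ?thesis using True by (simp add: pow)
  qed
qed

lemma cnj_unit_root_pow:
  assumes "n > 0" and "d \<le> n"
  shows "cnj (unit_root n ^ (k * d)) = unit_root n ^ (k * (n - d))"
proof -
  have "k * d + k * (n - d) = n * k"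
    using assms(2) by (metis add_mult_distrib2 le_add_diff_inverse mult.commute)
  then have "unit_root n ^ (k * d) * unit_root n ^ (k * (n - d)) = unit_root n ^ (n * k)"
    by (simp only: flip: power_add)
  also have "\<dots> = 1" using unit_root_pow_eq_1_iff[OF assms(1)] by simp
  finally show ?thesis by (rule cnj_eq_of_mult_eq_1) (simp add: norm_power)
qed

section \<open>Lower-triangular Toeplitz matrices\<close>

lemma idx_less_iff: "idx (i::'n::{finite,linorder}) < idx j \<longleftrightarrow> i < j"
proof -
  have "idx i < idx j" if "i < j" for i j :: 'n
  proof -
    have "{k. k < i} \<subset> {k. k < j}" using that by auto
    then show ?thesis unfolding idx_def by (simp add: psubset_card_mono)
  qed
  then show ?thesis by (metis less_asym neqE)
qed

lemma idx_eq_iff [simp]: "idx (i::'n::{finite,linorder}) = idx j \<longleftrightarrow> i = j"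
  by (metis idx_less_iff less_irrefl neqE)

lemma idx_less_card: "idx (i::'n::{finite,linorder}) < CARD('n)"
proof -
  have "{j. j < i} \<subset> (UNIV::'n set)" by auto
  then show ?thesis unfolding idx_def by (simp add: psubset_card_mono)
qed

lemma idx_surj: "m < CARD('n::{finite,linorder}) \<Longrightarrow> \<exists>i::'n. idx i = m"
proof -
  have "inj (idx :: 'n \<Rightarrow> nat)" by (simp add: inj_def)
  then have "card (range (idx :: 'n \<Rightarrow> nat)) = CARD('n)" by (simp add: card_image)
  moreover have "range (idx :: 'n \<Rightarrow> nat) \<subseteq> {..<CARD('n)}" using idx_less_card by auto
  ultimately have "range (idx :: 'n \<Rightarrow> nat) = {..<CARD('n)}" by (intro card_subset_eq) auto
  then show "m < CARD('n) \<Longrightarrow> \<exists>i::'n. idx i = m" by (metis lessThan_iff rangeE)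
qed

definition toeplitz :: "(nat \<Rightarrow> complex) \<Rightarrow> 'n::{finite,linorder} cmat" where
  "toeplitz \<tau> = (\<chi> i j. if idx j \<le> idx i then \<tau> (idx i - idx j) else 0)"

lemma toeplitz_nth: "toeplitz \<tau> $ i $ j = (if idx j \<le> idx i then \<tau> (idx i - idx j) else 0)"
  by (simp add: toeplitz_def)

lemma lt_toeplitz_eq_range: "lt_toeplitz = range toeplitz"
  by (auto simp: lt_toeplitz_def toeplitz_nth vec_eq_iff)

lemma toeplitz_in_lt_toeplitz [simp]: "toeplitz \<tau> \<in> lt_toeplitz"
  by (simp add: lt_toeplitz_eq_range)

lemma toeplitz_cong:
  assumes "\<And>k. k < CARD('n) \<Longrightarrow> \<tau> k = \<sigma> k"
  shows "(toeplitz \<tau> :: 'n::{finite,linorder} cmat) = toeplitz \<sigma>"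
proof -
  have "idx i - idx j < CARD('n)" for i j :: 'n
    using idx_less_card[of i] by linarith
  then show ?thesis using assms by (simp add: toeplitz_nth vec_eq_iff)
qed

lemma toeplitz_add: "toeplitz \<tau> + toeplitz \<sigma> = toeplitz (\<lambda>k. \<tau> k + \<sigma> k)"
  by (simp add: toeplitz_nth vec_eq_iff)

lemma cscale_toeplitz: "cscale c (toeplitz \<tau>) = toeplitz (\<lambda>k. c * \<tau> k)"
  by (simp add: toeplitz_nth vec_eq_iff)

lemma sum_cscale_toeplitz:
  "(\<Sum>k\<in>K. cscale (c k) (toeplitz (\<tau> k))) = toeplitz (\<lambda>d. \<Sum>k\<in>K. c k * \<tau> k d)"
  by (induction K rule: infinite_finite_induct)
    (simp_all add: toeplitz_nth vec_eq_iff distrib_left)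

lemma mat_1_eq_toeplitz: "mat 1 = toeplitz (\<lambda>k. of_bool (k = 0))"
  by (auto simp: toeplitz_nth mat_def vec_eq_iff)

lemma lt_toeplitz_add: "a \<in> lt_toeplitz \<Longrightarrow> b \<in> lt_toeplitz \<Longrightarrow> a + b \<in> lt_toeplitz"
  by (auto simp: lt_toeplitz_eq_range toeplitz_add)

lemma lt_toeplitz_cscale: "a \<in> lt_toeplitz \<Longrightarrow> cscale c a \<in> lt_toeplitz"
  by (auto simp: lt_toeplitz_eq_range cscale_toeplitz)

lemma zero_in_lt_toeplitz: "0 \<in> lt_toeplitz"
proof -
  have "(0 :: 'n::{finite,linorder} cmat) = toeplitz (\<lambda>_. 0)" by (simp add: toeplitz_nth vec_eq_iff)
  then show ?thesis by (metis toeplitz_in_lt_toeplitz)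
qed

lemma lt_toeplitz_sum: "(\<And>k. k \<in> K \<Longrightarrow> a k \<in> lt_toeplitz) \<Longrightarrow> (\<Sum>k\<in>K. a k) \<in> lt_toeplitz"
  by (induction K rule: infinite_finite_induct) (simp_all add: zero_in_lt_toeplitz lt_toeplitz_add)

lemma mat_1_in_lt_toeplitz: "mat 1 \<in> lt_toeplitz"
  by (simp add: mat_1_eq_toeplitz)

definition shift_pow :: "nat \<Rightarrow> 'n::{finite,linorder} cmat" where
  "shift_pow d = toeplitz (\<lambda>k. of_bool (k = d))"

lemma shift_pow_in_lt_toeplitz [simp]: "shift_pow d \<in> lt_toeplitz"
  by (simp add: shift_pow_def)

lemma shift_pow_nth: "shift_pow d $ i $ j = of_bool (idx i = idx j + d)"
  by (auto simp: shift_pow_def toeplitz_nth)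

lemma shift_pow_0: "shift_pow 0 = mat 1"
  by (simp add: shift_pow_def mat_1_eq_toeplitz)

lemma shift_pow_eq_0:
  assumes "CARD('n) \<le> d"
  shows "(shift_pow d :: 'n::{finite,linorder} cmat) = 0"
proof -
  from assms have "(shift_pow d :: 'n cmat) = toeplitz (\<lambda>_. 0)"
    unfolding shift_pow_def by (intro toeplitz_cong) auto
  then show ?thesis by (simp add: toeplitz_nth vec_eq_iff)
qed

lemma toeplitz_eq_sum_shift_pow:
  "(toeplitz \<tau> :: 'n::{finite,linorder} cmat) = (\<Sum>d<CARD('n). cscale (\<tau> d) (shift_pow d))"
  unfolding shift_pow_def sum_cscale_toeplitz
  by (intro toeplitz_cong) (simp add: of_bool_def if_distrib cong: if_cong)

lemma shift_pow_Suc: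
  "shift_pow 1 ** shift_pow d = (shift_pow (Suc d) :: 'n::{finite,linorder} cmat)"
proof -
  have "(\<Sum>k\<in>UNIV. shift_pow 1 $ i $ k * shift_pow d $ k $ j)
      = (shift_pow (Suc d) :: 'n cmat) $ i $ j"
    for i j :: 'n
  proof (cases "idx i = idx j + Suc d")
    case True
    then obtain k0 :: 'n where k0: "idx k0 = idx j + d"
      using idx_less_card[of i] idx_surj by (metis add_Suc_right Suc_lessD)
    have "(\<Sum>k\<in>UNIV. shift_pow 1 $ i $ k * shift_pow d $ k $ j)
        = (\<Sum>k\<in>UNIV. of_bool (k = k0) :: complex)"
      using True k0 by (intro sum.cong refl) (auto simp: shift_pow_nth simp flip: idx_eq_iff)
    then show ?thesis using True by (simp add: shift_pow_nth)
  next
    case False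
    then show ?thesis by (auto simp: shift_pow_nth intro!: sum.neutral)
  qed
  then show ?thesis by (simp add: vec_eq_iff matrix_matrix_mult_def)
qed

section \<open>Peaking Toeplitz matrices\<close>

definition peak :: "complex \<Rightarrow> 'n::{finite,linorder} cmat" where
  "peak z = toeplitz (\<lambda>k. (if k = 0 then 1 else 2 * z ^ k) / of_nat CARD('n))"

lemma peak_in_lt_toeplitz [simp]: "peak z \<in> lt_toeplitz"
  by (simp add: peak_def)

definition geom_vec :: "complex \<Rightarrow> 'n::{finite,linorder} cvec" where
  "geom_vec z = (\<chi> i. z ^ idx i)"

lemma re_part_peak:
  assumes "norm z = 1"
  shows "re_part (peak z :: 'n::{finite,linorder} cmat)
    = cscale (1 / of_nat CARD('n)) (outer (geom_vec z) (geom_vec z))"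
proof -
  have "(peak z $ i $ j + cnj (peak z $ j $ i)) / 2 = z ^ idx i * cnj (z ^ idx j) / of_nat CARD('n)"
    for i j :: 'n
  proof (cases "idx j \<le> idx i")
    case True
    have "i = j \<longleftrightarrow> idx i - idx j = 0" using True idx_eq_iff[of i j] by linarith
    then show ?thesis
      using assms unit_pow_mult_cnj_pow[OF assms True] True
      by (cases "i = j") (auto simp: peak_def toeplitz_nth mult_cnj_eq_1 simp del: idx_eq_iff)
  next
    case False
    then have "cnj (z ^ (idx j - idx i)) = z ^ idx i * cnj (z ^ idx j)"
      using unit_pow_mult_cnj_pow[OF assms, of "idx i" "idx j"]
      by (metis complex_cnj_cnj complex_cnj_mult complex_cnj_power mult.commute nat_le_linear)
    then show ?thesis
      using False by (simp add: peak_def toeplitz_nth)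
  qed
  then show ?thesis
    by (simp add: re_part_def vec_eq_iff outer_def geom_vec_def field_simps)
qed

lemma norm_geom_vec:
  assumes "norm z = 1"
  shows "(norm (geom_vec z :: 'n::{finite,linorder} cvec))\<^sup>2 = real CARD('n)"
proof -
  have "cnj (z ^ k) * z ^ k = 1" for k
    by (metis assms mult.commute mult_cnj_eq_1 norm_power power_one)
  then have "complex_of_real ((norm (geom_vec z :: 'n cvec))\<^sup>2) = (\<Sum>i\<in>(UNIV::'n set). 1)"
    unfolding cinner_self[symmetric] cinner_def geom_vec_def by (simp del: complex_cnj_power)
  also have "\<dots> = complex_of_real (real CARD('n))" by simp
  finally show ?thesis by (simp only: of_real_eq_iff)
qed

lemma peak_quadratic_form:
  assumes "norm z = 1"
  shows "inner x ((peak z :: 'n::{finite,linorder} cmat) *v x)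
    = (cmod (cinner (geom_vec z) x))\<^sup>2 / real CARD('n)"
proof -
  have "inner x ((peak z :: 'n cmat) *v x) = inner x (re_part (peak z) *v x)"
    by (simp add: inner_re_part)
  also have "\<dots> = inner x ((1 / real CARD('n)) *\<^sub>R (outer (geom_vec z) (geom_vec z) *v x))"
    by (simp add: re_part_peak assms cscale_matrix_vector_mult scaleR_eq_smult)
  finally show ?thesis by (simp add: inner_outer)
qed

lemma re_numrange_le_peak:
  assumes "norm z = 1"
  shows "re_numrange_le (peak z :: 'n::{finite,linorder} cmat) 1"
  unfolding re_numrange_le_def peak_quadratic_form[OF assms]
proof
  fix x :: "'n cvec"
  have "(cmod (cinner (geom_vec z) x))\<^sup>2 \<le> (norm (geom_vec z :: 'n cvec) * norm x)\<^sup>2"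
    by (intro power_mono cinner_cauchy_schwarz) simp
  then show "(cmod (cinner (geom_vec z) x))\<^sup>2 / real CARD('n) \<le> 1 * (norm x)\<^sup>2"
    by (simp add: power_mult_distrib norm_geom_vec[OF assms] field_simps)
qed

lemma re_numrange_le_uminus_peak:
  assumes "norm z = 1"
  shows "re_numrange_le (- peak z :: 'n::{finite,linorder} cmat) 0"
  by (simp add: re_numrange_le_def matrix_vector_mult_uminus peak_quadratic_form[OF assms])

lemma not_re_numrange_le_peak:
  assumes "norm z = 1" and "c < 1"
  shows "\<not> re_numrange_le (peak z :: 'n::{finite,linorder} cmat) c"
proof
  let ?v = "geom_vec z :: 'n cvec"
  assume "re_numrange_le (peak z :: 'n cmat) c"
  then have "inner ?v (peak z *v ?v) \<le> c * real CARD('n)"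
    by (simp add: re_numrange_le_def norm_geom_vec[OF assms(1), symmetric])
  moreover have "cinner ?v ?v = of_real (real CARD('n))"
    by (simp only: cinner_self norm_geom_vec[OF assms(1)])
  then have "inner ?v (peak z *v ?v) = real CARD('n)"
    by (simp add: peak_quadratic_form[OF assms(1)] power2_eq_square)
  ultimately show False using assms(2) by simp
qed

lemma sum_rotated_peak:
  assumes "e < CARD('n::{finite,linorder})"
  shows "(\<Sum>k<CARD('n). cscale (unit_root CARD('n) ^ (k * e)) (peak (\<zeta> * unit_root CARD('n) ^ k)))
    = (if e = 0 then mat 1
       else cscale (2 * \<zeta> ^ (CARD('n) - e)) (shift_pow (CARD('n) - e)) :: 'n cmat)"
proof -
  let ?n = "CARD('n)" and ?\<omega> = "unit_root CARD('n)"
  have n: "?n > 0" by simp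
  have "(\<Sum>k<?n. ?\<omega> ^ (k * e) * ((if d = 0 then 1 else 2 * (\<zeta> * ?\<omega> ^ k) ^ d) / of_nat ?n))
      = (if e = 0 then of_bool (d = 0) else 2 * \<zeta> ^ (?n - e) * of_bool (d = ?n - e))"
    if "d < ?n" for d
  proof (cases "d = 0")
    case True
    have "?n dvd e \<longleftrightarrow> e = 0" using assms by (auto dest: dvd_imp_le)
    then show ?thesis
      using True assms sum_unit_root_pow[OF n, of e] by (simp flip: sum_divide_distrib)
  next
    case False
    have "?n dvd (e + d) \<longleftrightarrow> e + d = ?n"
      using False that assms by (intro dvd_iff_eq_if_less_double) auto
    have "(\<Sum>k<?n. ?\<omega> ^ (k * e) * ((if d = 0 then 1 else 2 * (\<zeta> * ?\<omega> ^ k) ^ d) / of_nat ?n))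
        = 2 * \<zeta> ^ d * (\<Sum>k<?n. ?\<omega> ^ (k * (e + d))) / of_nat ?n"
      using False
      by (simp add: sum_distrib_left sum_divide_distrib power_mult_distrib add_mult_distrib2
          power_add mult_ac flip: power_mult)
    also have "\<dots> = 2 * \<zeta> ^ d * of_bool (e + d = ?n)"
      using sum_unit_root_pow[OF n, of "e + d"] \<open>?n dvd (e + d) \<longleftrightarrow> e + d = ?n\<close> by simp
    finally show ?thesis using False that by auto
  qed
  then show ?thesis
    unfolding peak_def sum_cscale_toeplitz
    by (auto simp: mat_1_eq_toeplitz shift_pow_def cscale_toeplitz intro!: toeplitz_cong)
qed

section \<open>Nilpotent matrices unitarily equivalent to the shift\<close>

primrec matpow :: "complex^'n^'n \<Rightarrow> nat \<Rightarrow> complex^'n^'n" where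
  "matpow A 0 = mat 1"
| "matpow A (Suc k) = A ** matpow A k"

lemma matpow_add: "matpow A (j + k) = matpow A j ** matpow A k"
  by (induction j) (simp_all add: matrix_mul_assoc)

lemma cadj_matpow: "cadj (matpow A k) = matpow (cadj A) k"
proof (induction k)
  case (Suc k)
  have "A ** matpow A k = matpow A k ** A"
    using matpow_add[of A k 1] by simp
  then show ?case using Suc by (simp add: cadj_matrix_mult)
qed simp

lemma matpow_shift_pow: "matpow (shift_pow 1) d = shift_pow d"
  by (induction d) (simp_all only: matpow.simps shift_pow_0 shift_pow_Suc)

lemma matpow_unitary_conj:
  assumes "unitary_mat W"
  shows "matpow (W ** B ** cadj W) d = W ** matpow B d ** cadj W"
proof (induction d)
  case 0
  then show ?case using assms by (simp add: unitary_mat_def)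
next
  case (Suc d)
  have WW: "cadj W ** W = mat 1" using assms by (simp add: unitary_mat_def)
  have "matpow (W ** B ** cadj W) (Suc d) = W ** B ** (cadj W ** W) ** matpow B d ** cadj W"
    by (simp only: matpow.simps Suc matrix_mul_assoc)
  also have "\<dots> = W ** matpow B (Suc d) ** cadj W"
    by (simp only: WW matrix_mul_rid matpow.simps matrix_mul_assoc)
  finally show ?case .
qed

lemma nilpotent_has_unit_kernel_vector:
  fixes B :: "complex^'n^'n"
  assumes "matpow B m = 0"
  shows "\<exists>f. norm f = 1 \<and> B *v f = 0"
proof -
  obtain i :: 'n where True by blast
  define x :: "complex^'n" where "x = axis i 1"
  define j where "j = (LEAST j. matpow B j *v x = 0)"
  have j: "matpow B j *v x = 0"
    unfolding j_def by (rule LeastI[of _ m]) (simp add: assms)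
  have "j \<noteq> 0"
  proof
    assume "j = 0"
    then show False using j by (simp add: x_def axis_eq_0_iff)
  qed
  then obtain j' where j': "j = Suc j'" by (cases j) auto
  define y where "y = matpow B j' *v x"
  have "y \<noteq> 0" using not_less_Least[of j' "\<lambda>j. matpow B j *v x = 0"] j' by (simp add: y_def j_def)
  moreover have "B *v y = 0" using j j' by (simp add: y_def matrix_vector_mul_assoc)
  ultimately show ?thesis
    by (intro exI[of _ "(1 / norm y) *\<^sub>R y"]) (simp add: matrix_vector_mult_scaleR_complex)
qed

lemma orbit_orthonormal:
  assumes "norm f = 1" and "cadj A *v f = 0"
    and adjoint_step: "\<And>i. i < m \<Longrightarrow> cadj A *v (matpow A (Suc i) *v f) = matpow A i *v f"
    and "j \<le> m" and "k \<le> m"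
  shows "cinner (matpow A j *v f) (matpow A k *v f) = of_bool (j = k)"
proof -
  let ?g = "\<lambda>k. matpow A k *v f"
  have le: "cinner (?g j) (?g k) = of_bool (j = k)" if "j \<le> k" "k \<le> m" for j k
    using that
  proof (induction j arbitrary: k)
    case 0
    show ?case
    proof (cases k)
      case (Suc k')
      have "cinner f (?g k) = cinner (cadj A *v f) (?g k')"
        by (simp add: Suc cinner_mv_right matrix_vector_mul_assoc[symmetric])
      then show ?thesis using assms(2) Suc by (simp add: cinner_def)
    qed (simp add: cinner_self assms(1))
  next
    case (Suc j)
    then obtain k' where k': "k = Suc k'" by (cases k) auto
    have "cinner (?g (Suc j)) (?g k) = cinner (?g j) (cadj A *v ?g (Suc k'))"
      by (simp add: k' cinner_mv_right matrix_vector_mul_assoc[symmetric])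
    also have "\<dots> = cinner (?g j) (?g k')" using adjoint_step[of k'] Suc.prems k' by simp
    finally show ?case using Suc.IH[of k'] Suc.prems k' by simp
  qed
  show ?thesis
  proof (cases "j \<le> k")
    case False
    then show ?thesis using le[of k j] assms(4) cnj_cinner[of "?g j" "?g k"] by simp
  qed (use le assms(5) in simp)
qed

definition matrix_of_cols :: "(nat \<Rightarrow> complex^('n::{finite,linorder})) \<Rightarrow> 'n cmat" where
  "matrix_of_cols g = (\<chi> r l. g (idx l) $ r)"

lemma unitary_matrix_of_cols:
  fixes g :: "nat \<Rightarrow> complex^('n::{finite,linorder})"
  assumes "\<And>j k. j < CARD('n) \<Longrightarrow> k < CARD('n) \<Longrightarrow> cinner (g j) (g k) = of_bool (j = k)"
  shows "unitary_mat (matrix_of_cols g)"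
proof -
  have "cinner (g (idx a)) (g (idx b)) = of_bool (a = b)" for a b :: 'n
    using assms idx_less_card[of a] idx_less_card[of b] by simp
  then have "cadj (matrix_of_cols g) ** matrix_of_cols g = mat 1"
    by (simp add: vec_eq_iff matrix_matrix_mult_def matrix_of_cols_def cinner_def mat_def)
  then show ?thesis
    using matrix_left_right_inverse by (auto simp: unitary_mat_def)
qed

lemma matrix_mult_matrix_of_cols: "A ** matrix_of_cols g = matrix_of_cols (\<lambda>k. A *v g k)"
  by (simp add: vec_eq_iff matrix_matrix_mult_def matrix_vector_mult_def matrix_of_cols_def)

lemma matrix_of_cols_mult_shift:
  fixes g :: "nat \<Rightarrow> complex^('n::{finite,linorder})"
  assumes "g CARD('n) = 0"
  shows "matrix_of_cols g ** shift_pow 1 = matrix_of_cols (\<lambda>k. g (Suc k))"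
proof -
  have "(\<Sum>k\<in>UNIV. g (idx k) $ r * shift_pow 1 $ k $ l) = g (Suc (idx l)) $ r" for r l :: 'n
  proof (cases "Suc (idx l) < CARD('n)")
    case True
    then obtain k0 :: 'n where k0: "idx k0 = Suc (idx l)" using idx_surj by blast
    then have "(\<Sum>k\<in>UNIV. g (idx k) $ r * shift_pow 1 $ k $ l)
        = (\<Sum>k\<in>UNIV. if k = k0 then g (idx k) $ r else 0)"
      by (intro sum.cong refl) (auto simp: shift_pow_nth simp flip: idx_eq_iff)
    then show ?thesis using k0 by simp
  next
    case False
    then have "Suc (idx l) = CARD('n)" using idx_less_card[of l] by simp
    moreover have "idx k \<noteq> idx l + 1" for k :: 'n using idx_less_card[of k] False by simp
    ultimately show ?thesis using assms by (simp add: shift_pow_nth)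
  qed
  then show ?thesis by (simp add: vec_eq_iff matrix_matrix_mult_def matrix_of_cols_def)
qed

lemma defect_adjoint_step:
  fixes A :: "complex^'n^'n"
  assumes defect: "cadj A ** A + matpow A m ** cadj (matpow A m) = mat 1"
    and kernel: "cadj A *v f = 0" and "i < m"
  shows "cadj A *v (matpow A (Suc i) *v f) = matpow A i *v f"
proof -
  let ?B = "cadj A"
  define g where "g k = matpow A k *v f" for k
  have g_Suc: "g (Suc k) = A *v g k" for k
    by (simp add: g_def matrix_vector_mul_assoc)
  have undo: "?B *v g (Suc k) = g k" if "matpow ?B m *v g k = 0" for k
  proof -
    have "?B ** A = mat 1 - matpow A m ** matpow ?B m"
      using defect by (simp add: cadj_matpow algebra_simps)
    then have "?B *v (A *v g k) = g k - matpow A m *v (matpow ?B m *v g k)"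
      by (simp add: matrix_vector_mul_assoc matrix_vector_mult_diff_rdistrib)
    then show ?thesis using that by (simp add: g_Suc)
  qed
  have step: "?B *v g (Suc k) = g k" if "k < m" and "matpow ?B k *v g k = f" for k
  proof (rule undo)
    have "matpow ?B (Suc (m - Suc k)) *v f = 0"
      using matpow_add[of ?B "m - Suc k" 1] kernel by (simp add: matrix_vector_mul_assoc[symmetric])
    moreover have "matpow ?B m = matpow ?B (Suc (m - Suc k)) ** matpow ?B k"
      using \<open>k < m\<close> matpow_add[of ?B "Suc (m - Suc k)" k] by (simp add: Suc_diff_Suc)
    ultimately show "matpow ?B m *v g k = 0"
      using that(2) by (simp flip: matrix_vector_mul_assoc)
  qed
  have "matpow ?B k *v g k = f" if "k \<le> m" for k
    using that
  proof (induction k)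
    case (Suc k)
    then have "matpow ?B k *v (?B *v g (Suc k)) = f" using step by simp
    then show ?case
      using matpow_add[of ?B k 1] by (simp add: matrix_vector_mul_assoc[symmetric])
  qed (simp add: g_def)
  then show ?thesis using step[OF \<open>i < m\<close>] \<open>i < m\<close> by (simp add: g_def)
qed

text \<open>The columns of the unitary are the orbit A^k f of a unit vector f in the kernel of A^*.\<close>

lemma unitarily_equivalent_shift:
  fixes A :: "'n::{finite,linorder} cmat"
  assumes nilpotent: "matpow A CARD('n) = 0"
    and defect: "cadj A ** A + matpow A (CARD('n) - 1) ** cadj (matpow A (CARD('n) - 1)) = mat 1"
  shows "\<exists>W. unitary_mat W \<and> A = W ** shift_pow 1 ** cadj W"
proof -
  let ?n = "CARD('n)"
  have "matpow (cadj A) ?n = 0"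
    using nilpotent by (simp add: vec_eq_iff flip: cadj_matpow)
  then obtain f where f: "norm f = 1" "cadj A *v f = 0"
    using nilpotent_has_unit_kernel_vector by blast
  define g where "g k = matpow A k *v f" for k
  have "cinner (g j) (g k) = of_bool (j = k)" if "j < ?n" "k < ?n" for j k
    unfolding g_def
    using orbit_orthonormal[OF f defect_adjoint_step[OF defect f(2)], where j = j and k = k] that
    by simp
  then have unitary: "unitary_mat (matrix_of_cols g)" by (rule unitary_matrix_of_cols)
  have "A ** matrix_of_cols g = matrix_of_cols (\<lambda>k. g (Suc k))"
    by (simp add: matrix_mult_matrix_of_cols g_def matrix_vector_mul_assoc)
  also have "\<dots> = matrix_of_cols g ** shift_pow 1"
    by (rule matrix_of_cols_mult_shift[symmetric]) (simp add: g_def nilpotent)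
  finally have "A = matrix_of_cols g ** shift_pow 1 ** cadj (matrix_of_cols g)"
    using unitary by (metis matrix_mul_assoc matrix_mul_rid unitary_mat_def)
  then show ?thesis using unitary by blast
qed

section \<open>Unital isometries of the Toeplitz algebra\<close>

locale toeplitz_isometry =
  fixes \<phi> :: "'n::{finite,linorder} cmat \<Rightarrow> 'n cmat"
  assumes additive: "\<And>a b. a \<in> lt_toeplitz \<Longrightarrow> b \<in> lt_toeplitz \<Longrightarrow> \<phi> (a + b) = \<phi> a + \<phi> b"
    and homogeneous: "\<And>c a. a \<in> lt_toeplitz \<Longrightarrow> \<phi> (cscale c a) = cscale c (\<phi> a)"
    and unital: "\<phi> (mat 1) = mat 1"
    and isometry: "\<And>a. a \<in> lt_toeplitz \<Longrightarrow> opnorm (\<phi> a) = opnorm a"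
begin

lemma map_zero: "\<phi> 0 = 0"
  using homogeneous[of "mat 1" 0] mat_1_in_lt_toeplitz by simp

lemma map_uminus: "a \<in> lt_toeplitz \<Longrightarrow> \<phi> (- a) = - \<phi> a"
  using homogeneous[of a "-1"] by (simp add: cscale_minus_one)

lemma map_sum_cscale:
  "(\<And>k. k \<in> K \<Longrightarrow> a k \<in> lt_toeplitz) \<Longrightarrow> \<phi> (\<Sum>k\<in>K. cscale (c k) (a k)) = (\<Sum>k\<in>K. cscale (c k) (\<phi> (a k)))"
proof (induction K rule: infinite_finite_induct)
  case (insert k K)
  have "(\<Sum>k\<in>K. cscale (c k) (a k)) \<in> lt_toeplitz"
    using insert.prems by (intro lt_toeplitz_sum lt_toeplitz_cscale) simp
  then show ?case
    using insert by (simp add: additive homogeneous lt_toeplitz_cscale)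
qed (simp_all add: map_zero)

lemma re_numrange_le_image_iff:
  assumes "a \<in> lt_toeplitz"
  shows "re_numrange_le (\<phi> a) c \<longleftrightarrow> re_numrange_le a c"
proof -
  have eq: "opnorm (mat 1 + cscale (of_real t) (\<phi> a)) = opnorm (mat 1 + cscale (of_real t) a)" for t
  proof -
    have "\<phi> (mat 1 + cscale (of_real t) a) = mat 1 + cscale (of_real t) (\<phi> a)"
      using assms by (simp add: additive homogeneous unital mat_1_in_lt_toeplitz lt_toeplitz_cscale)
    moreover have
      "opnorm (\<phi> (mat 1 + cscale (of_real t) a)) = opnorm (mat 1 + cscale (of_real t) a)"
      using assms by (intro isometry lt_toeplitz_add mat_1_in_lt_toeplitz lt_toeplitz_cscale)
    ultimately show ?thesis by simp
  qed
  show ?thesis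
  proof
    assume "re_numrange_le (\<phi> a) c"
    then show "re_numrange_le a c" by (rule re_numrange_le_transfer[rotated]) (simp add: eq)
  next
    assume "re_numrange_le a c"
    then show "re_numrange_le (\<phi> a) c" by (rule re_numrange_le_transfer[rotated]) (simp add: eq)
  qed
qed

definition shift_image :: "nat \<Rightarrow> 'n cmat" where
  "shift_image d = \<phi> (shift_pow d)"

lemma shift_image_0: "shift_image 0 = mat 1"
  by (simp add: shift_image_def shift_pow_0 unital)

lemma shift_image_card: "shift_image CARD('n) = 0"
  by (simp add: shift_image_def shift_pow_eq_0 map_zero)

definition re_peak_image :: "complex \<Rightarrow> 'n cmat" where
  "re_peak_image z = re_part (\<phi> (peak z))"

lemma psd_re_peak_image:
  assumes "norm z = 1"
  shows "psd (re_peak_image z)"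
proof -
  have "- peak z \<in> lt_toeplitz"
    using lt_toeplitz_cscale[of "peak z" "-1"] by (simp add: cscale_minus_one)
  then have "re_numrange_le (\<phi> (- peak z)) 0"
    using re_numrange_le_image_iff re_numrange_le_uminus_peak[OF assms] by blast
  then have "re_numrange_le (- re_peak_image z) 0"
    by (simp add: re_peak_image_def map_uminus re_numrange_le_re_part_iff flip: re_part_uminus)
  then show ?thesis
    by (simp add: psd_iff_re_numrange_le hermitian_re_part re_peak_image_def)
qed

lemma psd_one_minus_re_peak_image: "norm z = 1 \<Longrightarrow> psd (mat 1 - re_peak_image z)"
  by (simp add: psd_one_minus_iff_re_numrange_le hermitian_re_part re_peak_image_def
      re_numrange_le_re_part_iff re_numrange_le_image_iff re_numrange_le_peak)

lemma re_peak_image_attains_one: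
  "norm z = 1 \<Longrightarrow> \<exists>x. norm x = 1 \<and> inner x (re_peak_image z *v x) = 1"
  by (rule re_numrange_max_attained)
    (simp_all add: re_peak_image_def re_numrange_le_re_part_iff re_numrange_le_image_iff
      re_numrange_le_peak not_re_numrange_le_peak)

lemma sum_cscale_re_part_image:
  assumes "\<And>k. k \<in> K \<Longrightarrow> a k \<in> lt_toeplitz"
  shows "(\<Sum>k\<in>K. cscale (c k) (re_part (\<phi> (a k))))
    = cscale (1/2) (\<phi> (\<Sum>k\<in>K. cscale (c k) (a k)) + cadj (\<phi> (\<Sum>k\<in>K. cscale (cnj (c k)) (a k))))"
  using assms
  by (simp add: map_sum_cscale re_part_def cadj_sum cadj_cscale cscale_add cscale_sum cscale_cscale
      sum.distrib mult.commute)

definition rotated_dft :: "complex \<Rightarrow> nat \<Rightarrow> 'n cmat" where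
  "rotated_dft \<zeta> e = (\<Sum>k<CARD('n). cscale (unit_root CARD('n) ^ (k * e))
      (re_peak_image (\<zeta> * unit_root CARD('n) ^ k)))"

lemma rotated_dft_eq_shift_images:
  assumes "e < CARD('n)"
  shows "rotated_dft \<zeta> e = cscale (\<zeta> ^ (CARD('n) - e)) (shift_image (CARD('n) - e))
    + cscale (cnj \<zeta> ^ e) (cadj (shift_image e))"
proof -
  let ?n = "CARD('n)" and ?\<omega> = "unit_root CARD('n)"
  have dft: "rotated_dft \<zeta> e = cscale (1/2)
      (\<phi> (\<Sum>k<?n. cscale (?\<omega> ^ (k * e)) (peak (\<zeta> * ?\<omega> ^ k)))
        + cadj (\<phi> (\<Sum>k<?n. cscale (?\<omega> ^ (k * (?n - e))) (peak (\<zeta> * ?\<omega> ^ k)))))"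
    unfolding rotated_dft_def re_peak_image_def sum_cscale_re_part_image[OF peak_in_lt_toeplitz]
      cnj_unit_root_pow[OF zero_less_card_finite less_imp_le[OF assms]] ..
  show ?thesis
  proof (cases "e = 0")
    case True
    have "?\<omega> ^ (k * ?n) = 1" for k
      using unit_root_pow_eq_1_iff[of ?n "k * ?n"] by simp
    then have "rotated_dft \<zeta> e = cscale (1/2) (mat 1 + mat 1)"
      using dft sum_rotated_peak[where 'n='n, of 0 \<zeta>] True by (simp add: unital)
    then show ?thesis
      using True by (simp add: shift_image_card shift_image_0 vec_eq_iff mat_def)
  next
    case False
    have "(\<Sum>k<?n. cscale (?\<omega> ^ (k * e)) (peak (\<zeta> * ?\<omega> ^ k)))
        = cscale (2 * \<zeta> ^ (?n - e)) (shift_pow (?n - e) :: 'n cmat)"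
      using sum_rotated_peak[where 'n='n, of e \<zeta>] assms False by simp
    moreover have "(\<Sum>k<?n. cscale (?\<omega> ^ (k * (?n - e))) (peak (\<zeta> * ?\<omega> ^ k)))
        = cscale (2 * \<zeta> ^ e) (shift_pow e :: 'n cmat)"
      using sum_rotated_peak[where 'n='n, of "?n - e" \<zeta>] assms False by simp
    ultimately show ?thesis
      unfolding dft
      by (simp add: homogeneous cadj_cscale cscale_add cscale_cscale flip: shift_image_def)
  qed
qed

lemma sum_rotated_re_peak_image: "(\<Sum>k<CARD('n). re_peak_image (\<zeta> * unit_root CARD('n) ^ k)) = mat 1"
  using rotated_dft_eq_shift_images[of 0 \<zeta>]
  by (simp add: rotated_dft_def shift_image_card shift_image_0)

lemma rotated_re_peak_images_orthogonal:
  assumes "norm \<zeta> = 1" and "k < CARD('n)" and "l < CARD('n)"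
  shows "re_peak_image (\<zeta> * unit_root CARD('n) ^ k) ** re_peak_image (\<zeta> * unit_root CARD('n) ^ l)
    = (if k = l then re_peak_image (\<zeta> * unit_root CARD('n) ^ k) else 0)"
proof (rule psd_resolution_orthogonal[where P = "\<lambda>k. re_peak_image (\<zeta> * unit_root CARD('n) ^ k)"])
  have "norm (\<zeta> * unit_root CARD('n) ^ k) = 1" for k
    using assms(1) by (simp add: norm_mult norm_power)
  then show "psd (re_peak_image (\<zeta> * unit_root CARD('n) ^ k))"
    and "psd (mat 1 - re_peak_image (\<zeta> * unit_root CARD('n) ^ k))"
    and "\<exists>x. norm x = 1 \<and> inner x (re_peak_image (\<zeta> * unit_root CARD('n) ^ k) *v x) = 1" for k
    by (simp_all add: psd_re_peak_image psd_one_minus_re_peak_image re_peak_image_attains_one)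
qed (simp_all add: assms sum_rotated_re_peak_image)

lemma rotated_dft_mult:
  assumes "norm \<zeta> = 1"
  shows "rotated_dft \<zeta> e ** rotated_dft \<zeta> g = rotated_dft \<zeta> ((e + g) mod CARD('n))"
proof -
  let ?n = "CARD('n)" and ?\<omega> = "unit_root CARD('n)"
  let ?P = "\<lambda>k. re_peak_image (\<zeta> * ?\<omega> ^ k)"
  have pow: "?\<omega> ^ (l * g) * ?\<omega> ^ (l * e) = ?\<omega> ^ (l * ((e + g) mod ?n))" for l
  proof -
    have "?\<omega> ^ (l * g) * ?\<omega> ^ (l * e) = ?\<omega> ^ (l * (e + g))"
      by (simp add: add_mult_distrib2 add.commute flip: power_add)
    also have "\<dots> = ?\<omega> ^ ((l * (e + g)) mod ?n)" by (rule unit_root_pow_mod) simp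
    also have "(l * (e + g)) mod ?n = (l * ((e + g) mod ?n)) mod ?n"
      by (simp add: mod_mult_right_eq)
    also have "?\<omega> ^ \<dots> = ?\<omega> ^ (l * ((e + g) mod ?n))" by (rule unit_root_pow_mod[symmetric]) simp
    finally show ?thesis .
  qed
  have "rotated_dft \<zeta> e ** rotated_dft \<zeta> g
      = (\<Sum>l<?n. \<Sum>k<?n. cscale (?\<omega> ^ (l * g) * ?\<omega> ^ (k * e)) (?P k ** ?P l))"
    unfolding rotated_dft_def
    by (simp add: matrix_sum_mult matrix_mult_sum cscale_matrix_mult_left cscale_matrix_mult_right
        cscale_sum cscale_cscale)
  also have "\<dots> = (\<Sum>l<?n. cscale (?\<omega> ^ (l * g) * ?\<omega> ^ (l * e)) (?P l))"
    using rotated_re_peak_images_orthogonal[OF assms]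
    by (simp add: if_distrib[of "cscale _"] sum.delta cong: if_cong)
  also have "\<dots> = rotated_dft \<zeta> ((e + g) mod ?n)"
    by (simp add: rotated_dft_def pow)
  finally show ?thesis .
qed

definition twisted :: "complex \<Rightarrow> nat \<Rightarrow> 'n cmat" where
  "twisted \<beta> r = shift_image r + cscale \<beta> (cadj (shift_image (CARD('n) - r)))"

lemma rotated_dft_eq_twisted:
  assumes "norm \<zeta> = 1" and "1 \<le> r" and "r \<le> CARD('n)"
  shows "rotated_dft \<zeta> (CARD('n) - r) = cscale (\<zeta> ^ r) (twisted (cnj (\<zeta> ^ CARD('n))) r)"
proof -
  let ?n = "CARD('n)"
  have "\<zeta> ^ r * cnj (\<zeta> ^ ?n) = (\<zeta> ^ r * cnj \<zeta> ^ r) * cnj \<zeta> ^ (?n - r)"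
    using assms(3) by (simp add: mult.assoc flip: power_add)
  also have "\<zeta> ^ r * cnj \<zeta> ^ r = 1"
    using mult_cnj_eq_1[of "\<zeta> ^ r"] assms(1) by (simp add: norm_power)
  finally show ?thesis
    using assms rotated_dft_eq_shift_images[of "?n - r" \<zeta>]
    by (simp add: twisted_def cscale_add cscale_cscale)
qed

lemma twisted_mult:
  assumes "norm \<beta> = 1" and "1 \<le> r" and "1 \<le> s" and "r + s \<le> CARD('n)"
  shows "twisted \<beta> r ** twisted \<beta> s = twisted \<beta> (r + s)"
proof -
  let ?n = "CARD('n)"
  obtain \<zeta> where \<zeta>: "norm \<zeta> = 1" and \<beta>: "cnj (\<zeta> ^ ?n) = \<beta>"
    using exists_unit_power_cnj_eq[OF assms(1) zero_less_card_finite] by blast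
  have "((?n - r) + (?n - s)) mod ?n = ?n - (r + s)"
  proof -
    have "(?n - r) + (?n - s) = (?n - (r + s)) + ?n" using assms(2-4) by simp
    then show ?thesis using assms(2,3) by simp
  qed
  then have "rotated_dft \<zeta> (?n - r) ** rotated_dft \<zeta> (?n - s) = rotated_dft \<zeta> (?n - (r + s))"
    by (simp add: rotated_dft_mult[OF \<zeta>])
  then have "cscale (\<zeta> ^ (r + s)) (twisted \<beta> r ** twisted \<beta> s)
      = cscale (\<zeta> ^ (r + s)) (twisted \<beta> (r + s))"
    using assms(2-4) \<beta>
    by (simp add: rotated_dft_eq_twisted[OF \<zeta>] cscale_matrix_mult_left cscale_matrix_mult_right
        cscale_cscale power_add mult.commute)
  moreover have "\<zeta> ^ (r + s) \<noteq> 0" using \<zeta> by auto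
  ultimately show ?thesis by (simp add: cscale_cancel)
qed

lemma shift_image_relations:
  assumes "1 \<le> r" and "1 \<le> s" and "r + s \<le> CARD('n)"
  shows "shift_image r ** shift_image s = shift_image (r + s)"
    and "shift_image r ** cadj (shift_image (CARD('n) - s))
        + cadj (shift_image (CARD('n) - r)) ** shift_image s
      = cadj (shift_image (CARD('n) - (r + s)))"
proof -
  let ?T = shift_image and ?n = "CARD('n)"
  have "?T r ** ?T s + cscale \<beta> (?T r ** cadj (?T (?n - s)) + cadj (?T (?n - r)) ** ?T s)
      + cscale (\<beta>\<^sup>2) (cadj (?T (?n - r)) ** cadj (?T (?n - s)))
      = ?T (r + s) + cscale \<beta> (cadj (?T (?n - (r + s))))"
    if "\<beta> \<in> {1, -1, -\<i>}" for \<beta>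
  proof -
    have "norm \<beta> = 1" using that by auto
    from twisted_mult[OF this assms] show ?thesis
      by (simp add: twisted_def matrix_add_ldistrib matrix_add_rdistrib cscale_matrix_mult_left
          cscale_matrix_mult_right cscale_cscale cscale_add power2_eq_square add_ac)
  qed
  then show "?T r ** ?T s = ?T (r + s)"
    and "?T r ** cadj (?T (?n - s)) + cadj (?T (?n - r)) ** ?T s = cadj (?T (?n - (r + s)))"
    by (fact matrix_quadratic_identity_coeffs(1), fact matrix_quadratic_identity_coeffs(2))
qed

lemma shift_image_eq_matpow: "m \<le> CARD('n) \<Longrightarrow> shift_image m = matpow (shift_image 1) m"
proof (induction m)
  case (Suc m)
  show ?case
  proof (cases "m = 0")
    case False
    then have "shift_image (1 + m) = shift_image 1 ** shift_image m"
      using Suc.prems by (intro shift_image_relations(1)[symmetric]) auto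
    then show ?thesis using Suc by simp
  qed simp
qed (simp add: shift_image_0)

lemma shift_image_defect:
  "cadj (shift_image 1) ** shift_image 1
    + shift_image (CARD('n) - 1) ** cadj (shift_image (CARD('n) - 1))
    = mat 1"
proof (cases "CARD('n) = 1")
  case True
  then have "shift_image 1 = 0" using shift_image_card by simp
  then show ?thesis using True by (simp add: shift_image_0)
next
  case False
  then have "2 \<le> CARD('n)" using zero_less_card_finite[where 'a='n] by linarith
  then show ?thesis
    using shift_image_relations(2)[of "CARD('n) - 1" 1] by (simp add: shift_image_0 add.commute)
qed

lemma exists_unitary_conj: "\<exists>W. unitary_mat W \<and> (\<forall>a \<in> lt_toeplitz. \<phi> a = W ** a ** cadj W)"
proof -
  let ?n = "CARD('n)"
  have "matpow (shift_image 1) ?n = 0"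
    using shift_image_card shift_image_eq_matpow[of ?n] by simp
  moreover have "matpow (shift_image 1) (?n - 1) = shift_image (?n - 1)"
    using shift_image_eq_matpow[of "?n - 1"] by simp
  ultimately obtain W where W: "unitary_mat W" and "shift_image 1 = W ** shift_pow 1 ** cadj W"
    using unitarily_equivalent_shift shift_image_defect by metis
  have shifts: "shift_image d = W ** shift_pow d ** cadj W" if "d < ?n" for d
  proof -
    have "shift_image d = matpow (W ** shift_pow 1 ** cadj W) d"
      using that shift_image_eq_matpow[of d] \<open>shift_image 1 = _\<close> by simp
    also have "\<dots> = W ** shift_pow d ** cadj W"
      by (simp only: matpow_unitary_conj[OF W] matpow_shift_pow)
    finally show ?thesis .
  qed
  have conj: "\<phi> a = W ** a ** cadj W" if lt: "a \<in> lt_toeplitz" for a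
  proof -
    obtain \<tau> where "a = toeplitz \<tau>"
      using lt by (auto simp: lt_toeplitz_eq_range)
    then have a: "a = (\<Sum>d<?n. cscale (\<tau> d) (shift_pow d))"
      by (simp add: toeplitz_eq_sum_shift_pow)
    then have "\<phi> a = (\<Sum>d<?n. cscale (\<tau> d) (W ** shift_pow d ** cadj W))"
      by (simp add: map_sum_cscale shifts flip: shift_image_def)
    also have "\<dots> = W ** a ** cadj W"
      by (simp add: a matrix_sum_mult matrix_mult_sum cscale_matrix_mult_left
          cscale_matrix_mult_right)
    finally show ?thesis .
  qed
  show ?thesis using W conj by blast
qed

end

theorem proposition5p3:
  fixes \<phi> :: "complex^('n::{finite,linorder})^('n::{finite,linorder}) \<Rightarrow> complex^('n::{finite,linorder})^('n::{finite,linorder})"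
  assumes additive: "\<And>a b. a \<in> lt_toeplitz \<Longrightarrow> b \<in> lt_toeplitz \<Longrightarrow> \<phi> (a + b) = \<phi> a + \<phi> b"
    and homogeneous: "\<And>c a. a \<in> lt_toeplitz \<Longrightarrow> \<phi> (cscale c a) = cscale c (\<phi> a)"
    and unital: "\<phi> (mat 1) = mat 1"
    and isometry: "\<And>a. a \<in> lt_toeplitz \<Longrightarrow> opnorm (\<phi> a) = opnorm a"
  shows "\<exists>v. unitary_mat v \<and> (\<forall>a \<in> lt_toeplitz. \<phi> a = cadj v ** a ** v)"
proof -
  interpret toeplitz_isometry \<phi>
    using assms by unfold_locales
  obtain W where "unitary_mat W" and "\<forall>a \<in> lt_toeplitz. \<phi> a = W ** a ** cadj W"
    using exists_unitary_conj by blast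
  then have "unitary_mat (cadj W) \<and> (\<forall>a \<in> lt_toeplitz. \<phi> a = cadj (cadj W) ** a ** cadj W)"
    by (auto simp: unitary_mat_def)
  then show ?thesis by blast
qed

end
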